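(* Assume (R) and (F), let $\alpha\in(0,\infty)^T$, let $u_t(x)=\frac{1}{\alpha_t}[1-\exp(-\alpha_tx)]$ for $t\in\mathbb{T}$, fix initial wealth $w\in\mathbb{R}$, and let $Z\in L^\infty$ have the representation $Z=\sum_{t=1}^T z_t1_{(t-1<\tau\le t)}+z_{T+1}1_{(T<\tau)}$. Then: (a) the indifference price is $H(Z)=\log h_0$; (b) the optimal intertemporal allocation $(X_t)\in\mathcal{A}(w+H(Z)-Z)$ of $w+H(Z)-Z$ (which satisfies $\sum_tE[u_t(\tilde X_t)]=U(w+H(Z)-Z)=U(w)$) is given by $X_1=\frac{B_1}{\alpha_1}\big[\beta_1(w+H(Z))-\beta_1z_1 1_{(0<\tau\le1)}-\beta_1\log h_1\,1_{(1<\tau)}\big]$ and, for $t=2,\dots,T$, $X_t=\frac{B_t}{\alpha_t}\Big[\beta_1(w+H(Z))-\sum_{k=1}^t\beta_kz_k1_{(k-1<\tau\le k)}-\beta_t\log h_t\,1_{(t<\tau)}+\sum_{k=1}^{t-1}\frac{\beta_{k+1}\beta_k}{\alpha_k}\log h_k\,1_{(k<\tau)}\Big]$.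
   Context: Let $T\ge1$, $\mathbb{T}=\{1,\dots,T\}$, and $(\Omega,\mathcal{F},P)$ a probability space carrying a random variable $\tau$ with $\tau(\omega)>0$ for all $\omega$ and $P(\tau=s)=0$ for all $s\in[0,\infty)$. Let $D_t=1_{(\tau\le t)}$ for $t=0,\dots,T$ and $\mathcal{H}_t=\sigma(D_s:s=0,\dots,t)$. Condition (F): the filtration is $\mathcal{F}_t=\mathcal{H}_t$; $L^\infty=L^\infty(\Omega,\mathcal{F}_T,P)$. Condition (R): the interest rates $r_t\ge0$ are deterministic; $B_0=1$, $B_t=\prod_{k=1}^t(1+r_k)$, $\tilde X_t=X_t/B_t$. For $W\in L^\infty$, $\mathcal{A}(W)$ is the set of adapted processes $(Y_t)_{t\in\mathbb{T}}$ with $Y_t\in L^\infty$ and $\sum_{t}\tilde Y_t=W$ a.s.; $U(W)=\sup\{\sum_tE[u_t(\tilde Y_t)]:(Y_t)\in\mathcal{A}(W)\}$; the indifference price $H(Z)$ is the real number with $U(w+H(Z)-Z)=U(w)$. Let $q_t=P(\tau\le t+1\mid\tau>t)$, $p_t=1-q_t$ ($t=0,\dots,T-1$). Define $\beta_t$ by $1/\beta_t=\sum_{k=t}^T1/\alpha_k$, and $h_T=e^{z_{T+1}}$, $h_{t-1}=\big[e^{\beta_tz_t}q_{t-1}+h_t^{\beta_t}p_{t-1}\big]^{1/\beta_t}$ for $t=1,\dots,T$. *)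

theory Defs
  imports "HOL-Probability.Probability"
begin

definition Dproc :: "('a \<Rightarrow> real) \<Rightarrow> nat \<Rightarrow> 'a \<Rightarrow> real" where
  "Dproc \<tau> t \<omega> = (if \<tau> \<omega> \<le> real t then 1 else 0)"

definition filt :: "'a measure \<Rightarrow> ('a \<Rightarrow> real) \<Rightarrow> nat \<Rightarrow> 'a measure" where
  "filt M \<tau> t = sigma (space M)
     (\<Union>s\<in>{0..t}. {(Dproc \<tau> s) -` A \<inter> space M | A. A \<in> sets borel})"

definition Linf :: "'a measure \<Rightarrow> ('a \<Rightarrow> real) \<Rightarrow> nat \<Rightarrow> ('a \<Rightarrow> real) set" where
  "Linf M \<tau> T = {W. W \<in> borel_measurable (filt M \<tau> T) \<and> (\<exists>C. AE \<omega> in M. \<bar>W \<omega>\<bar> \<le> C)}"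

definition disc :: "(nat \<Rightarrow> real) \<Rightarrow> nat \<Rightarrow> real" where
  "disc r t = (\<Prod>k=1..t. 1 + r k)"

definition adm :: "'a measure \<Rightarrow> ('a \<Rightarrow> real) \<Rightarrow> nat \<Rightarrow> (nat \<Rightarrow> real) \<Rightarrow> ('a \<Rightarrow> real)
    \<Rightarrow> (nat \<Rightarrow> 'a \<Rightarrow> real) set" where
  "adm M \<tau> T r W = {Y. (\<forall>t\<in>{1..T}. Y t \<in> borel_measurable (filt M \<tau> t) \<and> Y t \<in> Linf M \<tau> T)
      \<and> (AE \<omega> in M. (\<Sum>t=1..T. Y t \<omega> / disc r t) = W \<omega>)}"

definition EU :: "'a measure \<Rightarrow> nat \<Rightarrow> (nat \<Rightarrow> real) \<Rightarrow> (nat \<Rightarrow> real \<Rightarrow> real)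
    \<Rightarrow> (nat \<Rightarrow> 'a \<Rightarrow> real) \<Rightarrow> real" where
  "EU M T r u Y = (\<Sum>t=1..T. integral\<^sup>L M (\<lambda>\<omega>. u t (Y t \<omega> / disc r t)))"

definition Uval :: "'a measure \<Rightarrow> ('a \<Rightarrow> real) \<Rightarrow> nat \<Rightarrow> (nat \<Rightarrow> real) \<Rightarrow> (nat \<Rightarrow> real \<Rightarrow> real)
    \<Rightarrow> ('a \<Rightarrow> real) \<Rightarrow> real" where
  "Uval M \<tau> T r u W = Sup {EU M T r u Y | Y. Y \<in> adm M \<tau> T r W}"

definition betaw :: "(nat \<Rightarrow> real) \<Rightarrow> nat \<Rightarrow> nat \<Rightarrow> real" where
  "betaw \<alpha> T t = 1 / (\<Sum>k=t..T. 1 / \<alpha> k)"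

text \<open>hh beta q z T n = h_(T-n): h_T = exp z_(T+1),
  h_(t-1) = [exp(beta_t z_t) q_(t-1) + h_t^beta_t p_(t-1)]^(1/beta_t), p = 1 - q.\<close>
primrec hh :: "(nat \<Rightarrow> real) \<Rightarrow> (nat \<Rightarrow> real) \<Rightarrow> (nat \<Rightarrow> real) \<Rightarrow> nat \<Rightarrow> nat \<Rightarrow> real" where
  "hh \<beta> q z T 0 = exp (z (Suc T))"
| "hh \<beta> q z T (Suc n) =
     (exp (\<beta> (T - n) * z (T - n)) * q (T - n - 1)
      + (hh \<beta> q z T n) powr (\<beta> (T - n)) * (1 - q (T - n - 1))) powr (1 / \<beta> (T - n))"

definition qdef :: "'a measure \<Rightarrow> ('a \<Rightarrow> real) \<Rightarrow> nat \<Rightarrow> real" where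
  "qdef M \<tau> t = \<P>(\<omega> in M. \<tau> \<omega> \<le> real t + 1 \<bar> \<tau> \<omega> > real t)"

definition hdef :: "'a measure \<Rightarrow> ('a \<Rightarrow> real) \<Rightarrow> (nat \<Rightarrow> real) \<Rightarrow> (nat \<Rightarrow> real) \<Rightarrow> nat \<Rightarrow> nat \<Rightarrow> real" where
  "hdef M \<tau> \<alpha> z T t = hh (betaw \<alpha> T) (qdef M \<tau>) z T (T - t)"

end

theory Submission
  imports Defs
begin

text \<open>
  Write \<open>\<ell>\<^sub>t = \<alpha>\<^sub>t X\<^sub>t / B\<^sub>t\<close> for the candidate allocation, so that
  \<open>exp (- \<ell>\<^sub>t)\<close> is its marginal utility at date \<open>t\<close>. After default
  \<open>\<ell>\<^sub>t\<close> no longer moves, so it agrees with \<open>\<ell>\<^sub>T\<close>; before default it is a constant,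
  and the backward recursion for \<open>h\<^sub>t\<close> is exactly the statement that this constant times
  \<open>P(\<tau> > t)\<close> equals \<open>E[exp (- \<ell>\<^sub>T); \<tau> > t]\<close>. Since an \<open>\<H>\<^sub>t\<close>-measurable variable is
  constant on \<open>{\<tau> > t}\<close>, the terminal marginal utility \<open>exp (- \<ell>\<^sub>T)\<close> therefore prices
  every bounded \<open>\<H>\<^sub>t\<close>-measurable payment like \<open>exp (- \<ell>\<^sub>t)\<close> does.

  The candidate exhausts the budget \<open>w + H(Z) - Z\<close> pathwise, so for any admissible \<open>Y\<close> the
  concavity of \<open>u\<^sub>t\<close> gives \<open>EU(Y) - EU(X) \<le> \<Sum>\<^sub>t E[exp (- \<ell>\<^sub>T) (Y\<^sub>t - X\<^sub>t) / B\<^sub>t] = 0\<close>,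
  with equality only if \<open>Y = X\<close> almost surely. Evaluating
  \<open>U(v - Z) = (\<Sum>\<^sub>t 1 / \<alpha>\<^sub>t) (1 - exp (- \<beta>\<^sub>1 (v - log h\<^sub>0)))\<close> identifies the indifference
  price as \<open>log h\<^sub>0\<close>.
\<close>

section \<open>Exponential utility\<close>

lemma exp_utility_below_tangent:
  fixes a x y :: real
  assumes "0 < a"
  shows "(1 / a) * (1 - exp (- a * y)) \<le> (1 / a) * (1 - exp (- a * x)) + exp (- a * x) * (y - x)"
proof -
  have "1 - a * (y - x) \<le> exp (- (a * (y - x)))"
    by (rule exp_minus_ge)
  then have "exp (- a * x) - exp (- a * y) \<le> a * (exp (- a * x) * (y - x))"
    using mult_left_mono[of _ _ "exp (- a * x)"] by (fastforce simp: algebra_simps simp flip: exp_add)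
  then have "(1 / a) * (exp (- a * x) - exp (- a * y)) \<le> (1 / a) * (a * (exp (- a * x) * (y - x)))"
    using assms by (intro mult_left_mono) auto
  then show ?thesis
    using assms by (simp add: algebra_simps)
qed

lemma exp_utility_below_tangent_strict:
  fixes a x y :: real
  assumes "0 < a" and "y \<noteq> x"
  shows "(1 / a) * (1 - exp (- a * y)) < (1 / a) * (1 - exp (- a * x)) + exp (- a * x) * (y - x)"
proof -
  have "1 - a * (y - x) < exp (- (a * (y - x)))"
    using assms by (simp add: exp_minus_greater)
  then have "exp (- a * x) - exp (- a * y) < a * (exp (- a * x) * (y - x))"
    using mult_strict_left_mono[of _ _ "exp (- a * x)"] by (fastforce simp: algebra_simps simp flip: exp_add)
  then have "(1 / a) * (exp (- a * x) - exp (- a * y)) < (1 / a) * (a * (exp (- a * x) * (y - x)))"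
    using assms by (intro mult_strict_left_mono) auto
  then show ?thesis
    using assms by (simp add: algebra_simps)
qed

lemma exp_utility_abs_le:
  fixes a y B :: real
  assumes "0 < a" and "\<bar>y\<bar> \<le> B"
  shows "\<bar>(1 / a) * (1 - exp (- a * y))\<bar> \<le> (1 / a) * (1 + exp (a * B))"
proof -
  have "exp (- a * y) \<le> exp (a * B)"
    using assms mult_left_mono[of "- y" B a] by simp
  then have "\<bar>1 - exp (- a * y)\<bar> \<le> 1 + exp (a * B)"
    using exp_gt_zero[of "- a * y"] by linarith
  then show ?thesis
    using assms by (simp add: abs_mult divide_right_mono)
qed

section \<open>The weights \<open>\<beta>\<close> and the recursion for \<open>h\<close>\<close>

lemma betaw_pos:
  assumes "\<And>k. k \<in> {t..T} \<Longrightarrow> 0 < \<alpha> k" and "t \<le> T"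
  shows "0 < betaw \<alpha> T t"
  unfolding betaw_def using assms by (simp add: sum_pos del: atLeastAtMost_iff)

lemma betaw_last: "betaw \<alpha> T T = \<alpha> T"
  unfolding betaw_def by simp

lemma inverse_betaw_Suc:
  assumes "t < T"
  shows "1 / betaw \<alpha> T t = 1 / \<alpha> t + 1 / betaw \<alpha> T (Suc t)"
  unfolding betaw_def using assms by (simp add: sum.atLeast_Suc_atMost)

lemma betaw_Suc_diff:
  assumes "\<And>k. k \<in> {t..T} \<Longrightarrow> 0 < \<alpha> k" and "t < T"
  shows "betaw \<alpha> T (Suc t) * betaw \<alpha> T t / \<alpha> t = betaw \<alpha> T (Suc t) - betaw \<alpha> T t"
proof -
  have "0 < betaw \<alpha> T t" "0 < betaw \<alpha> T (Suc t)" "0 < \<alpha> t"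
    using assms by (auto intro!: betaw_pos)
  then show ?thesis
    using inverse_betaw_Suc[OF assms(2), of \<alpha>] by (simp add: field_simps)
qed

lemma hh_pos:
  assumes "\<And>m. 0 \<le> q m \<and> q m \<le> 1"
  shows "0 < hh \<beta> q z T n"
proof (induction n)
  case (Suc n)
  let ?q = "q (T - n - 1)" and ?e = "exp (\<beta> (T - n) * z (T - n))"
    and ?g = "hh \<beta> q z T n powr \<beta> (T - n)"
  have "0 \<le> ?q" "?q \<le> 1" "0 < ?g"
    using assms Suc.IH by auto
  then have "0 < ?e * ?q + ?g * (1 - ?q)"
    by (cases "?q = 0") (auto intro: add_pos_nonneg)
  then show ?case by simp
qed simp

lemma hh_zero_claim: "hh \<beta> q (\<lambda>_. 0) T n = 1"
  by (induction n) auto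

section \<open>The default filtration\<close>

lemma space_filt [simp]: "space (filt M \<tau> t) = space M"
  unfolding filt_def by (simp add: space_measure_of_conv)

lemma sets_filt:
  "sets (filt M \<tau> t) = sigma_sets (space M) (\<Union>s\<in>{0..t}. {Dproc \<tau> s -` A \<inter> space M | A. A \<in> sets borel})"
  unfolding filt_def by (rule sets_measure_of) auto

lemma Dproc_measurable_filt:
  assumes "s \<le> t"
  shows "Dproc \<tau> s \<in> borel_measurable (filt M \<tau> t)"
proof (rule measurableI)
  fix A :: "real set"
  assume "A \<in> sets borel"
  then have "Dproc \<tau> s -` A \<inter> space M \<in> (\<Union>s\<in>{0..t}. {Dproc \<tau> s -` A \<inter> space M | A. A \<in> sets borel})"
    using assms by (intro UN_I[of s]) auto
  then show "Dproc \<tau> s -` A \<inter> space (filt M \<tau> t) \<in> sets (filt M \<tau> t)"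
    unfolding sets_filt space_filt by (rule sigma_sets.Basic)
qed simp

lemma Dproc_measurable:
  assumes [measurable]: "\<tau> \<in> borel_measurable M"
  shows "Dproc \<tau> s \<in> borel_measurable M"
  unfolding Dproc_def by measurable

lemma sets_filt_subset:
  assumes "\<tau> \<in> borel_measurable M"
  shows "sets (filt M \<tau> t) \<subseteq> sets M"
  unfolding sets_filt
proof (rule sets.sigma_sets_subset)
  show "(\<Union>s\<in>{0..t}. {Dproc \<tau> s -` A \<inter> space M | A. A \<in> sets borel}) \<subseteq> sets M"
    using measurable_sets[OF Dproc_measurable[OF assms]] by auto
qed

lemma measurable_filt_imp_measurable:
  assumes "\<tau> \<in> borel_measurable M" and "f \<in> borel_measurable (filt M \<tau> t)"
  shows "f \<in> borel_measurable M"
  by (rule measurable_from_subalg[OF _ assms(2)]) (simp add: subalgebra_def sets_filt_subset[OF assms(1)])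

lemma filt_set_survival_cases:
  assumes "S \<in> sets (filt M \<tau> t)"
  shows "{\<omega>\<in>space M. real t < \<tau> \<omega>} \<subseteq> S \<or> {\<omega>\<in>space M. real t < \<tau> \<omega>} \<inter> S = {}"
proof -
  let ?R = "{\<omega>\<in>space M. real t < \<tau> \<omega>}"
  have "\<forall>\<omega>\<in>?R. \<forall>\<omega>'\<in>?R. \<omega> \<in> S \<longleftrightarrow> \<omega>' \<in> S"
    using assms[unfolded sets_filt]
  proof induction
    case (Basic a)
    then obtain s A where s: "s \<le> t" and a: "a = Dproc \<tau> s -` A \<inter> space M"
      by auto
    have "Dproc \<tau> s \<omega> = 0" if "\<omega> \<in> ?R" for \<omega>
      using that s by (auto simp: Dproc_def)
    then show ?case
      using a by auto
  next
    case (Compl a)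
    then show ?case by blast
  next
    case (Union a)
    then show ?case by blast
  qed simp
  then show ?thesis by blast
qed

lemma filt_measurable_const_on_survival:
  assumes "f \<in> borel_measurable (filt M \<tau> t)"
  obtains c :: real where "\<And>\<omega>. \<omega> \<in> space M \<Longrightarrow> real t < \<tau> \<omega> \<Longrightarrow> f \<omega> = c"
proof (cases "\<exists>\<omega>0\<in>space M. real t < \<tau> \<omega>0")
  case True
  then obtain \<omega>0 where \<omega>0: "\<omega>0 \<in> space M" "real t < \<tau> \<omega>0" by blast
  have "f -` {f \<omega>0} \<inter> space M \<in> sets (filt M \<tau> t)"
    using measurable_sets[OF assms, of "{f \<omega>0}"] by simp
  from filt_set_survival_cases[OF this] \<omega>0 have "\<And>\<omega>. \<omega> \<in> space M \<Longrightarrow> real t < \<tau> \<omega> \<Longrightarrow> f \<omega> = f \<omega>0"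
    by blast
  then show ?thesis by (rule that)
qed (use that in auto)

lemma survival_indicator_filt_measurable:
  assumes "k \<le> s"
  shows "(\<lambda>\<omega>. if real k < \<tau> \<omega> then 1 else 0 :: real) \<in> borel_measurable (filt M \<tau> s)"
proof -
  have "(\<lambda>\<omega>. if real k < \<tau> \<omega> then 1 else 0 :: real) = (\<lambda>\<omega>. 1 - Dproc \<tau> k \<omega>)"
    by (auto simp: Dproc_def)
  then show ?thesis
    using assms by (simp add: Dproc_measurable_filt borel_measurable_diff)
qed

lemma period_indicator_filt_measurable:
  assumes "1 \<le> k" and "k \<le> s"
  shows "(\<lambda>\<omega>. if real k - 1 < \<tau> \<omega> \<and> \<tau> \<omega> \<le> real k then 1 else 0 :: real) \<in> borel_measurable (filt M \<tau> s)"
proof -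
  have "(\<lambda>\<omega>. if real k - 1 < \<tau> \<omega> \<and> \<tau> \<omega> \<le> real k then 1 else 0 :: real) = (\<lambda>\<omega>. Dproc \<tau> k \<omega> - Dproc \<tau> (k - 1) \<omega>)"
    using assms by (auto simp: Dproc_def of_nat_diff)
  then show ?thesis
    using assms by (simp add: Dproc_measurable_filt borel_measurable_diff)
qed

section \<open>The default model\<close>

lemma (in finite_measure) integrable_bounded_times_AE_bounded:
  fixes f g :: "'a \<Rightarrow> real"
  assumes [measurable]: "f \<in> borel_measurable M" "g \<in> borel_measurable M"
    and "\<And>x. x \<in> space M \<Longrightarrow> \<bar>f x\<bar> \<le> K"
    and "AE x in M. \<bar>g x\<bar> \<le> C"
  shows "integrable M (\<lambda>x. f x * g x)"
proof (rule integrable_const_bound)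
  show "AE x in M. norm (f x * g x) \<le> K * C"
    using assms(4) AE_space
  proof eventually_elim
    case (elim x)
    then show ?case
      using assms(3)[of x] by (simp add: abs_mult mult_mono')
  qed
qed measurable

locale default_model = prob_space M for M :: "'a measure" +
  fixes \<tau> :: "'a \<Rightarrow> real" and T :: nat and r \<alpha> :: "nat \<Rightarrow> real"
  assumes T_ge_1: "1 \<le> T"
    and \<tau>_measurable [measurable]: "\<tau> \<in> borel_measurable M"
    and \<tau>_pos: "\<And>\<omega>. \<omega> \<in> space M \<Longrightarrow> 0 < \<tau> \<omega>"
    and r_nonneg: "\<And>t. t \<in> {1..T} \<Longrightarrow> 0 \<le> r t"
    and \<alpha>_pos: "\<And>t. t \<in> {1..T} \<Longrightarrow> 0 < \<alpha> t"
begin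

abbreviation \<beta> :: "nat \<Rightarrow> real" where "\<beta> \<equiv> betaw \<alpha> T"

abbreviation h :: "(nat \<Rightarrow> real) \<Rightarrow> nat \<Rightarrow> real" where "h z \<equiv> hdef M \<tau> \<alpha> z T"

lemma \<beta>_pos: "t \<in> {1..T} \<Longrightarrow> 0 < \<beta> t"
  by (rule betaw_pos) (auto intro: \<alpha>_pos)

lemma \<beta>_Suc_diff: "t \<in> {1..<T} \<Longrightarrow> \<beta> (Suc t) * \<beta> t / \<alpha> t = \<beta> (Suc t) - \<beta> t"
  by (rule betaw_Suc_diff) (auto intro: \<alpha>_pos)

lemma disc_pos: "t \<in> {1..T} \<Longrightarrow> 0 < disc r t"
  unfolding disc_def by (intro prod_pos) (simp add: add_pos_nonneg r_nonneg)

definition survival :: "nat \<Rightarrow> real" where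
  "survival t = prob {\<omega>\<in>space M. real t < \<tau> \<omega>}"

definition default_prob :: "nat \<Rightarrow> real" where
  "default_prob t = prob {\<omega>\<in>space M. real t - 1 < \<tau> \<omega> \<and> \<tau> \<omega> \<le> real t}"

lemma survival_0: "survival 0 = 1"
proof -
  have "{\<omega>\<in>space M. real 0 < \<tau> \<omega>} = space M"
    using \<tau>_pos by auto
  then show ?thesis
    unfolding survival_def by (simp add: prob_space)
qed

lemma survival_split:
  assumes "1 \<le> t"
  shows "survival (t - 1) = default_prob t + survival t"
proof -
  have "{\<omega>\<in>space M. real (t - 1) < \<tau> \<omega>}
      = {\<omega>\<in>space M. real t - 1 < \<tau> \<omega> \<and> \<tau> \<omega> \<le> real t} \<union> {\<omega>\<in>space M. real t < \<tau> \<omega>}"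
    using assms by (auto simp: of_nat_diff)
  then show ?thesis
    unfolding survival_def default_prob_def by (simp add: finite_measure_Union disjoint_iff)
qed

lemma qdef_bounds: "0 \<le> qdef M \<tau> m \<and> qdef M \<tau> m \<le> 1"
proof -
  have "prob {\<omega>\<in>space M. \<tau> \<omega> \<le> real m + 1 \<and> real m < \<tau> \<omega>} \<le> prob {\<omega>\<in>space M. real m < \<tau> \<omega>}"
    by (intro finite_measure_mono) auto
  then show ?thesis
    using measure_nonneg[of M "{\<omega>\<in>space M. real m < \<tau> \<omega>}"]
    unfolding qdef_def cond_prob_def by (auto simp: divide_le_eq_1 order_less_le)
qed

text \<open>\<open>qdef\<close> is a quotient by \<open>survival (t - 1)\<close>, with junk value \<open>0\<close> when that vanishes;
  the product form below holds in either case.\<close>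

lemma qdef_times_survival:
  assumes "1 \<le> t"
  shows "qdef M \<tau> (t - 1) * survival (t - 1) = default_prob t"
proof -
  have "{\<omega>\<in>space M. \<tau> \<omega> \<le> real (t - 1) + 1 \<and> real (t - 1) < \<tau> \<omega>}
      = {\<omega>\<in>space M. real t - 1 < \<tau> \<omega> \<and> \<tau> \<omega> \<le> real t}"
    using assms by (auto simp: of_nat_diff)
  then have q: "qdef M \<tau> (t - 1) = default_prob t / survival (t - 1)"
    unfolding qdef_def cond_prob_def default_prob_def survival_def by simp
  show ?thesis
  proof (cases "survival (t - 1) = 0")
    case True
    have "0 \<le> default_prob t" "0 \<le> survival t"
      unfolding default_prob_def survival_def by simp_all
    with True show ?thesis
      using survival_split[OF assms] by simp
  next
    case False
    then show ?thesis
      unfolding q by simp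
  qed
qed

lemma h_pos: "0 < h z t"
  unfolding hdef_def by (rule hh_pos) (rule qdef_bounds)

lemma h_last: "h z T = exp (z (T + 1))"
  unfolding hdef_def by simp

lemma h_zero_claim: "h (\<lambda>_. 0) t = 1"
  unfolding hdef_def by (rule hh_zero_claim)

lemma h_powr_recursion:
  assumes "t \<in> {1..T}"
  shows "h z (t - 1) powr \<beta> t
    = exp (\<beta> t * z t) * qdef M \<tau> (t - 1) + h z t powr \<beta> t * (1 - qdef M \<tau> (t - 1))"
proof -
  define S where "S = exp (\<beta> t * z t) * qdef M \<tau> (t - 1) + h z t powr \<beta> t * (1 - qdef M \<tau> (t - 1))"
  have "T - (t - 1) = Suc (T - t)" "T - (T - t) = t"
    using assms by auto
  then have "h z (t - 1) = S powr (1 / \<beta> t)"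
    unfolding hdef_def S_def by simp
  moreover have "0 \<le> S"
    unfolding S_def using qdef_bounds[of "t - 1"] by simp
  ultimately show ?thesis
    using \<beta>_pos[OF assms] by (simp add: powr_powr S_def)
qed

definition base_level :: "(nat \<Rightarrow> real) \<Rightarrow> real \<Rightarrow> nat \<Rightarrow> real" where
  "base_level z v t = \<beta> 1 * v + (\<Sum>k\<in>{1..<t}. (\<beta> (Suc k) - \<beta> k) * ln (h z k))"

definition alive_level :: "(nat \<Rightarrow> real) \<Rightarrow> real \<Rightarrow> nat \<Rightarrow> real" where
  "alive_level z v t = base_level z v t - \<beta> t * ln (h z t)"

definition default_level :: "(nat \<Rightarrow> real) \<Rightarrow> real \<Rightarrow> nat \<Rightarrow> real" where
  "default_level z v t = base_level z v t - \<beta> t * z t"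

lemma base_level_Suc:
  "1 \<le> t \<Longrightarrow> base_level z v (Suc t) = base_level z v t + (\<beta> (Suc t) - \<beta> t) * ln (h z t)"
  unfolding base_level_def by simp

text \<open>This one-period identity is what the backward recursion for \<open>h\<close> is designed to give.\<close>

lemma default_survival_balance:
  assumes "t \<in> {1..T}"
  shows "default_prob t * exp (- default_level z v t) + survival t * exp (- alive_level z v t)
    = survival (t - 1) * exp (- (base_level z v t - \<beta> t * ln (h z (t - 1))))"
proof -
  let ?q = "qdef M \<tau> (t - 1)" and ?e = "exp (- base_level z v t)"
  have exp_ln_h: "exp (\<beta> t * ln (h z s)) = h z s powr \<beta> t" for s
    using h_pos[of z s] by (simp add: powr_def)
  have default: "exp (- default_level z v t) = ?e * exp (\<beta> t * z t)"
    unfolding default_level_def by (simp flip: exp_add)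
  have alive: "exp (- alive_level z v t) = ?e * h z t powr \<beta> t"
    unfolding alive_level_def by (simp flip: exp_add exp_ln_h)
  have before: "exp (- (base_level z v t - \<beta> t * ln (h z (t - 1)))) = ?e * h z (t - 1) powr \<beta> t"
    by (simp flip: exp_add exp_ln_h)
  have default_prob: "default_prob t = ?q * survival (t - 1)"
    using qdef_times_survival assms by simp
  have survival: "survival t = survival (t - 1) - ?q * survival (t - 1)"
    using qdef_times_survival survival_split assms by simp
  show ?thesis
    unfolding default alive before h_powr_recursion[OF assms] default_prob survival
    by (simp add: algebra_simps)
qed

definition default_period :: "'a \<Rightarrow> nat" where
  "default_period \<omega> = nat \<lceil>\<tau> \<omega>\<rceil>"

lemma default_period_measurable [measurable]: "default_period \<in> measurable M (count_space UNIV)"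
  unfolding default_period_def by measurable

lemma in_period_iff:
  assumes "\<omega> \<in> space M"
  shows "real k - 1 < \<tau> \<omega> \<and> \<tau> \<omega> \<le> real k \<longleftrightarrow> k = default_period \<omega>"
proof -
  have "real k - 1 < \<tau> \<omega> \<and> \<tau> \<omega> \<le> real k \<longleftrightarrow> \<lceil>\<tau> \<omega>\<rceil> = int k"
    by (simp add: ceiling_eq_iff)
  then show ?thesis
    using \<tau>_pos[OF assms] unfolding default_period_def by auto
qed

lemma survives_iff:
  assumes "\<omega> \<in> space M"
  shows "real k < \<tau> \<omega> \<longleftrightarrow> k < default_period \<omega>"
proof -
  have "real k < \<tau> \<omega> \<longleftrightarrow> int k < \<lceil>\<tau> \<omega>\<rceil>"
    by (simp add: less_ceiling_iff)
  then show ?thesis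
    using \<tau>_pos[OF assms] unfolding default_period_def by auto
qed

lemma default_period_ge_1: "\<omega> \<in> space M \<Longrightarrow> 1 \<le> default_period \<omega>"
  using survives_iff[of \<omega> 0] \<tau>_pos by simp

lemma sum_in_period_indicator:
  assumes "\<omega> \<in> space M"
  shows "(\<Sum>k=1..t. f k * (if real k - 1 < \<tau> \<omega> \<and> \<tau> \<omega> \<le> real k then 1 else 0))
    = (if default_period \<omega> \<le> t then f (default_period \<omega>) else (0::real))"
proof -
  have "(\<Sum>k=1..t. f k * (if real k - 1 < \<tau> \<omega> \<and> \<tau> \<omega> \<le> real k then 1 else 0))
      = (\<Sum>k\<in>{1..t}. if k = default_period \<omega> then f k else 0)"
    by (rule sum.cong) (auto simp: in_period_iff[OF assms])
  then show ?thesis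
    using default_period_ge_1[OF assms] by simp
qed

lemma sum_survives_indicator:
  assumes "\<omega> \<in> space M"
  shows "(\<Sum>k=1..t-1. f k * (if real k < \<tau> \<omega> then 1 else 0))
    = (\<Sum>k\<in>{1..<min t (default_period \<omega>)}. f k :: real)"
proof -
  have "(\<Sum>k=1..t-1. f k * (if real k < \<tau> \<omega> then 1 else 0))
      = (\<Sum>k\<in>{1..<t}. if k \<in> {..<default_period \<omega>} then f k else 0)"
    by (rule sum.cong) (auto simp: survives_iff[OF assms])
  also have "\<dots> = sum f ({1..<t} \<inter> {..<default_period \<omega>})"
    by (simp add: sum.inter_restrict)
  also have "{1..<t} \<inter> {..<default_period \<omega>} = {1..<min t (default_period \<omega>)}"
    by auto
  finally show ?thesis .
qed

section \<open>Marginal utility of the candidate\<close>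

text \<open>\<open>level z v t\<close> is \<open>\<alpha>\<^sub>t\<close> times the discounted candidate consumption at date \<open>t\<close>,
  so \<open>exp (- level z v t)\<close> is its marginal utility.\<close>

definition level :: "(nat \<Rightarrow> real) \<Rightarrow> real \<Rightarrow> nat \<Rightarrow> 'a \<Rightarrow> real" where
  "level z v t \<omega> =
    (if real t < \<tau> \<omega> then alive_level z v t else default_level z v (default_period \<omega>))"

lemma level_measurable [measurable]: "level z v t \<in> borel_measurable M"
  unfolding level_def by measurable

definition level_bound :: "(nat \<Rightarrow> real) \<Rightarrow> real \<Rightarrow> real" where
  "level_bound z v = (\<Sum>n=1..T. \<bar>alive_level z v n\<bar> + \<bar>default_level z v n\<bar>)"

lemma abs_level_le:
  assumes "\<omega> \<in> space M" and "t \<in> {1..T}"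
  shows "\<bar>level z v t \<omega>\<bar> \<le> level_bound z v"
proof -
  have "\<bar>f n\<bar> \<le> level_bound z v"
    if "n \<in> {1..T}" and "f = alive_level z v \<or> f = default_level z v" for f n
    using that unfolding level_bound_def
    by (intro order.trans[OF _ member_le_sum[of n]]) auto
  moreover have "default_period \<omega> \<in> {1..T}" if "\<not> real t < \<tau> \<omega>"
    using that assms default_period_ge_1 survives_iff[of \<omega> t] by auto
  ultimately show ?thesis
    using assms unfolding level_def by auto
qed

lemma abs_marginal_le:
  assumes "\<omega> \<in> space M" and "t \<in> {1..T}"
  shows "\<bar>exp (- level z v t \<omega>)\<bar> \<le> exp (level_bound z v)"
  using abs_level_le[OF assms] by (simp add: abs_le_iff)

lemma integrable_marginal [simp]:
  assumes "t \<in> {1..T}"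
  shows "integrable M (\<lambda>\<omega>. exp (- level z v t \<omega>))"
proof (rule integrable_const_bound)
  show "AE \<omega> in M. norm (exp (- level z v t \<omega>)) \<le> exp (level_bound z v)"
    using abs_marginal_le[OF _ assms] by (intro AE_I2) simp
qed measurable

lemma level_after_default:
  assumes "\<omega> \<in> space M" and "t \<in> {1..T}" and "\<not> real t < \<tau> \<omega>"
  shows "level z v t \<omega> = level z v T \<omega>"
  using assms unfolding level_def by auto

lemma integral_terminal_marginal_split:
  assumes "t \<in> {1..T}"
  shows "(\<integral>\<omega>. exp (- level z v T \<omega>) * indicator {\<omega>\<in>space M. real (t - 1) < \<tau> \<omega>} \<omega> \<partial>M)
    = default_prob t * exp (- default_level z v t)
      + (\<integral>\<omega>. exp (- level z v T \<omega>) * indicator {\<omega>\<in>space M. real t < \<tau> \<omega>} \<omega> \<partial>M)"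
proof -
  let ?A = "{\<omega>\<in>space M. real t - 1 < \<tau> \<omega> \<and> \<tau> \<omega> \<le> real t}"
  have "exp (- level z v T \<omega>) * indicator {\<omega>\<in>space M. real (t - 1) < \<tau> \<omega>} \<omega>
      = exp (- default_level z v t) * indicator ?A \<omega>
        + exp (- level z v T \<omega>) * indicator {\<omega>\<in>space M. real t < \<tau> \<omega>} \<omega>"
    if "\<omega> \<in> space M" for \<omega>
  proof (cases "real t - 1 < \<tau> \<omega> \<and> \<tau> \<omega> \<le> real t")
    case True
    then have "default_period \<omega> = t"
      using in_period_iff[OF that] by simp
    with True assms show ?thesis
      using that by (auto simp: level_def indicator_def of_nat_diff)
  qed (use that assms in \<open>auto simp: indicator_def of_nat_diff\<close>)
  then have "(\<integral>\<omega>. exp (- level z v T \<omega>) * indicator {\<omega>\<in>space M. real (t - 1) < \<tau> \<omega>} \<omega> \<partial>M)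
      = (\<integral>\<omega>. exp (- default_level z v t) * indicator ?A \<omega>
          + exp (- level z v T \<omega>) * indicator {\<omega>\<in>space M. real t < \<tau> \<omega>} \<omega> \<partial>M)"
    by (intro Bochner_Integration.integral_cong) auto
  also have "\<dots> = default_prob t * exp (- default_level z v t)
      + (\<integral>\<omega>. exp (- level z v T \<omega>) * indicator {\<omega>\<in>space M. real t < \<tau> \<omega>} \<omega> \<partial>M)"
    using T_ge_1 unfolding default_prob_def
    by (subst Bochner_Integration.integral_add)
      (auto intro!: integrable_real_mult_indicator simp: emeasure_eq_measure)
  finally show ?thesis .
qed

lemma integral_terminal_marginal_survival:
  assumes "1 \<le> t" and "t \<le> T"
  shows "(\<integral>\<omega>. exp (- level z v T \<omega>) * indicator {\<omega>\<in>space M. real t < \<tau> \<omega>} \<omega> \<partial>M)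
    = survival t * exp (- alive_level z v t)"
  using assms(2)
proof (induction t rule: inc_induct)
  case base
  have "(\<integral>\<omega>. exp (- level z v T \<omega>) * indicator {\<omega>\<in>space M. real T < \<tau> \<omega>} \<omega> \<partial>M)
      = (\<integral>\<omega>. exp (- alive_level z v T) * indicator {\<omega>\<in>space M. real T < \<tau> \<omega>} \<omega> \<partial>M)"
    by (intro Bochner_Integration.integral_cong) (auto simp: level_def indicator_def)
  then show ?case
    unfolding survival_def by simp
next
  case (step n)
  have "n \<in> {1..<T}" "Suc n \<in> {1..T}"
    using step assms by auto
  then show ?case
    using integral_terminal_marginal_split[of "Suc n" z v] step.IH
      default_survival_balance[of "Suc n" z v] base_level_Suc[of n z v]
    by (simp add: alive_level_def algebra_simps)
qed

lemma integral_terminal_marginal: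
  "(\<integral>\<omega>. exp (- level z v T \<omega>) \<partial>M) = exp (- \<beta> 1 * (v - ln (h z 0)))"
proof -
  have "1 \<in> {1..T}"
    using T_ge_1 by simp
  have "(\<integral>\<omega>. exp (- level z v T \<omega>) \<partial>M)
      = (\<integral>\<omega>. exp (- level z v T \<omega>) * indicator {\<omega>\<in>space M. real (1 - 1) < \<tau> \<omega>} \<omega> \<partial>M)"
    by (intro Bochner_Integration.integral_cong) (auto simp: indicator_def \<tau>_pos)
  also have "\<dots> = survival 0 * exp (- (base_level z v 1 - \<beta> 1 * ln (h z 0)))"
    using integral_terminal_marginal_split[OF \<open>1 \<in> {1..T}\<close>] T_ge_1
      integral_terminal_marginal_survival[of 1] default_survival_balance[OF \<open>1 \<in> {1..T}\<close>]
    by simp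
  finally show ?thesis
    by (simp add: survival_0 base_level_def algebra_simps)
qed

lemma integrable_marginal_times:
  assumes "t \<in> {1..T}" and "D \<in> borel_measurable M" and "AE \<omega> in M. \<bar>D \<omega>\<bar> \<le> C"
  shows "integrable M (\<lambda>\<omega>. exp (- level z v t \<omega>) * D \<omega>)"
proof (rule integrable_bounded_times_AE_bounded[OF _ assms(2) _ assms(3)])
  show "(\<lambda>\<omega>. exp (- level z v t \<omega>)) \<in> borel_measurable M"
    by measurable
  show "\<And>\<omega>. \<omega> \<in> space M \<Longrightarrow> \<bar>exp (- level z v t \<omega>)\<bar> \<le> exp (level_bound z v)"
    using abs_marginal_le assms(1) by blast
qed

lemma integral_marginal_eq_terminal:
  assumes "t \<in> {1..T}" and [measurable]: "D \<in> borel_measurable M"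
    and "AE \<omega> in M. \<bar>D \<omega>\<bar> \<le> C" and "\<And>\<omega>. \<omega> \<in> space M \<Longrightarrow> real t < \<tau> \<omega> \<Longrightarrow> D \<omega> = d"
  shows "(\<integral>\<omega>. exp (- level z v t \<omega>) * D \<omega> \<partial>M) = (\<integral>\<omega>. exp (- level z v T \<omega>) * D \<omega> \<partial>M)"
proof -
  let ?S = "{\<omega>\<in>space M. real t < \<tau> \<omega>}"
  have "exp (- level z v t \<omega>) * D \<omega> = exp (- level z v T \<omega>) * D \<omega>
      + d * (exp (- alive_level z v t) * indicator ?S \<omega> - exp (- level z v T \<omega>) * indicator ?S \<omega>)"
    if "\<omega> \<in> space M" for \<omega>
    using that assms(1,4) level_after_default[OF that assms(1)]
    by (cases "real t < \<tau> \<omega>") (auto simp: level_def indicator_def algebra_simps)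
  then have "(\<integral>\<omega>. exp (- level z v t \<omega>) * D \<omega> \<partial>M)
      = (\<integral>\<omega>. exp (- level z v T \<omega>) * D \<omega>
          + d * (exp (- alive_level z v t) * indicator ?S \<omega> - exp (- level z v T \<omega>) * indicator ?S \<omega>) \<partial>M)"
    by (intro Bochner_Integration.integral_cong) auto
  also have "\<dots> = (\<integral>\<omega>. exp (- level z v T \<omega>) * D \<omega> \<partial>M)
      + d * (exp (- alive_level z v t) * survival t - survival t * exp (- alive_level z v t))"
  proof -
    have "integrable M (\<lambda>\<omega>. exp (- level z v T \<omega>) * D \<omega>)"
      using T_ge_1 assms(3) by (intro integrable_marginal_times) auto
    then show ?thesis
      using assms(1) T_ge_1 integral_terminal_marginal_survival[of t z v]
      by (simp add: integrable_real_mult_indicator survival_def emeasure_eq_measure)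
  qed
  finally show ?thesis by simp
qed

section \<open>The candidate allocation\<close>

definition opt_alloc :: "(nat \<Rightarrow> real) \<Rightarrow> real \<Rightarrow> nat \<Rightarrow> 'a \<Rightarrow> real" where
  "opt_alloc z v t \<omega> = disc r t / \<alpha> t *
    (\<beta> 1 * v
     - (\<Sum>k=1..t. \<beta> k * z k * (if real k - 1 < \<tau> \<omega> \<and> \<tau> \<omega> \<le> real k then 1 else 0))
     - \<beta> t * ln (h z t) * (if real t < \<tau> \<omega> then 1 else 0)
     + (\<Sum>k=1..t-1. \<beta> (k + 1) * \<beta> k / \<alpha> k * ln (h z k) * (if real k < \<tau> \<omega> then 1 else 0)))"

lemma opt_alloc_discounted:
  assumes "\<omega> \<in> space M" and "t \<in> {1..T}"
  shows "opt_alloc z v t \<omega> / disc r t = level z v t \<omega> / \<alpha> t"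
proof -
  let ?N = "default_period \<omega>"
  have in_period: "(\<Sum>k=1..t. \<beta> k * z k * (if real k - 1 < \<tau> \<omega> \<and> \<tau> \<omega> \<le> real k then 1 else 0))
      = (if ?N \<le> t then \<beta> ?N * z ?N else 0)"
    by (rule sum_in_period_indicator[OF assms(1)])
  have "(\<Sum>k=1..t-1. \<beta> (k + 1) * \<beta> k / \<alpha> k * ln (h z k) * (if real k < \<tau> \<omega> then 1 else 0))
      = (\<Sum>k\<in>{1..<min t ?N}. \<beta> (k + 1) * \<beta> k / \<alpha> k * ln (h z k))"
    by (rule sum_survives_indicator[OF assms(1)])
  also have "\<dots> = (\<Sum>k\<in>{1..<min t ?N}. (\<beta> (Suc k) - \<beta> k) * ln (h z k))"
    using assms(2) by (intro sum.cong) (auto simp: \<beta>_Suc_diff)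
  finally have survived: "(\<Sum>k=1..t-1. \<beta> (k + 1) * \<beta> k / \<alpha> k * ln (h z k) * (if real k < \<tau> \<omega> then 1 else 0))
      = (\<Sum>k\<in>{1..<min t ?N}. (\<beta> (Suc k) - \<beta> k) * ln (h z k))" .
  have "\<beta> 1 * v
     - (\<Sum>k=1..t. \<beta> k * z k * (if real k - 1 < \<tau> \<omega> \<and> \<tau> \<omega> \<le> real k then 1 else 0))
     - \<beta> t * ln (h z t) * (if real t < \<tau> \<omega> then 1 else 0)
     + (\<Sum>k=1..t-1. \<beta> (k + 1) * \<beta> k / \<alpha> k * ln (h z k) * (if real k < \<tau> \<omega> then 1 else 0))
     = level z v t \<omega>"
    unfolding in_period survived level_def alive_level_def default_level_def base_level_def
    using survives_iff[OF assms(1), of t] by (auto simp: min_def)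
  then show ?thesis
    using disc_pos[OF assms(2)] unfolding opt_alloc_def by simp
qed

definition claim :: "(nat \<Rightarrow> real) \<Rightarrow> 'a \<Rightarrow> real" where
  "claim z \<omega> = (\<Sum>t=1..T. z t * (if real t - 1 < \<tau> \<omega> \<and> \<tau> \<omega> \<le> real t then 1 else 0))
    + z (T + 1) * (if real T < \<tau> \<omega> then 1 else 0)"

lemma claim_eq:
  assumes "\<omega> \<in> space M"
  shows "claim z \<omega> = (if real T < \<tau> \<omega> then z (T + 1) else z (default_period \<omega>))"
  using sum_in_period_indicator[OF assms, of z T] survives_iff[OF assms, of T]
  unfolding claim_def by auto

lemma sum_alive_levels:
  assumes "1 \<le> N" and "N \<le> T"
  shows "(\<Sum>t\<in>{1..<N}. alive_level z v t / \<alpha> t) + base_level z v N / \<beta> N = v"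
  using assms(1)
proof (induction N rule: dec_induct)
  case base
  then show ?case
    using \<beta>_pos[of 1] T_ge_1 unfolding base_level_def by simp
next
  case (step n)
  have "n < T" "1 \<le> n"
    using step assms by auto
  have pos: "0 < \<alpha> n" "0 < \<beta> n" "0 < \<beta> (Suc n)"
    using \<open>n < T\<close> \<open>1 \<le> n\<close> by (auto intro: \<alpha>_pos \<beta>_pos)
  let ?B = "base_level z v n" and ?L = "ln (h z n)"
  have "alive_level z v n / \<alpha> n + base_level z v (Suc n) / \<beta> (Suc n)
      = ?B * (1 / \<alpha> n + 1 / \<beta> (Suc n)) + ?L * (1 - \<beta> n * (1 / \<alpha> n + 1 / \<beta> (Suc n)))"
    unfolding alive_level_def base_level_Suc[OF \<open>1 \<le> n\<close>] using pos by (simp add: field_simps)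
  also have "\<dots> = ?B / \<beta> n"
    using pos by (simp flip: inverse_betaw_Suc[OF \<open>n < T\<close>])
  finally show ?case
    using step.IH \<open>1 \<le> n\<close> by simp
qed

lemma budget_opt_alloc:
  assumes "\<omega> \<in> space M"
  shows "(\<Sum>t=1..T. opt_alloc z v t \<omega> / disc r t) = v - claim z \<omega>"
proof -
  let ?N = "default_period \<omega>"
  have "(\<Sum>t=1..T. opt_alloc z v t \<omega> / disc r t) = (\<Sum>t=1..T. level z v t \<omega> / \<alpha> t)"
    by (intro sum.cong) (auto simp: opt_alloc_discounted[OF assms])
  also have "\<dots> = v - claim z \<omega>"
  proof (cases "real T < \<tau> \<omega>")
    case True
    have "(\<Sum>t=1..T. level z v t \<omega> / \<alpha> t) = (\<Sum>t=1..T. alive_level z v t / \<alpha> t)"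
      using True by (intro sum.cong) (auto simp: level_def)
    also have "\<dots> = (\<Sum>t\<in>{1..<T}. alive_level z v t / \<alpha> t) + alive_level z v T / \<alpha> T"
      using T_ge_1 by (simp add: atLeastLessThanSuc_atLeastAtMost[symmetric] sum.atLeastLessThan_Suc)
    finally show ?thesis
      using sum_alive_levels[OF T_ge_1 order.refl, of z v] True claim_eq[OF assms, of z] \<alpha>_pos[of T] T_ge_1
      by (simp add: alive_level_def h_last betaw_last diff_divide_distrib)
  next
    case False
    then have N: "1 \<le> ?N" "?N \<le> T"
      using survives_iff[OF assms, of T] default_period_ge_1[OF assms] by auto
    have "(\<Sum>t=1..T. level z v t \<omega> / \<alpha> t)
        = (\<Sum>t\<in>{1..<?N}. level z v t \<omega> / \<alpha> t) + (\<Sum>t\<in>{?N..T}. level z v t \<omega> / \<alpha> t)"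
      using N by (subst sum.union_disjoint[symmetric]) (auto intro: sum.cong)
    also have "\<dots> = (\<Sum>t\<in>{1..<?N}. alive_level z v t / \<alpha> t) + default_level z v ?N * (\<Sum>t\<in>{?N..T}. 1 / \<alpha> t)"
      unfolding sum_distrib_left
      by (intro arg_cong2[where f = "(+)"] sum.cong) (auto simp: level_def survives_iff[OF assms])
    also have "(\<Sum>t\<in>{?N..T}. 1 / \<alpha> t) = 1 / \<beta> ?N"
      unfolding betaw_def by simp
    finally show ?thesis
      using sum_alive_levels[OF N, of z v] \<beta>_pos[of ?N] N False claim_eq[OF assms, of z]
      by (simp add: default_level_def diff_divide_distrib)
  qed
  finally show ?thesis .
qed

lemma opt_alloc_filt_measurable:
  assumes "t \<le> s"
  shows "opt_alloc z v t \<in> borel_measurable (filt M \<tau> s)"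
  unfolding opt_alloc_def using assms
  by (intro borel_measurable_times borel_measurable_diff borel_measurable_add borel_measurable_sum
      borel_measurable_const survival_indicator_filt_measurable period_indicator_filt_measurable) auto

lemma abs_opt_alloc_le:
  assumes "\<omega> \<in> space M" and "t \<in> {1..T}"
  shows "\<bar>opt_alloc z v t \<omega>\<bar> \<le> disc r t * (level_bound z v / \<alpha> t)"
proof -
  have "opt_alloc z v t \<omega> = disc r t * (level z v t \<omega> / \<alpha> t)"
    using opt_alloc_discounted[OF assms] disc_pos[OF assms(2)] by (simp add: field_simps)
  then have "\<bar>opt_alloc z v t \<omega>\<bar> = disc r t * (\<bar>level z v t \<omega>\<bar> / \<alpha> t)"
    using disc_pos[OF assms(2)] \<alpha>_pos[OF assms(2)] by (simp add: abs_mult)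
  also have "\<dots> \<le> disc r t * (level_bound z v / \<alpha> t)"
    using abs_level_le[OF assms] disc_pos[OF assms(2)] \<alpha>_pos[OF assms(2)]
    by (simp add: divide_right_mono)
  finally show ?thesis .
qed

lemma opt_alloc_admissible: "opt_alloc z v \<in> adm M \<tau> T r (\<lambda>\<omega>. v - claim z \<omega>)"
  unfolding adm_def Linf_def
proof (intro CollectI conjI ballI)
  fix t
  assume t: "t \<in> {1..T}"
  show "opt_alloc z v t \<in> borel_measurable (filt M \<tau> t)"
    by (rule opt_alloc_filt_measurable) simp
  show "opt_alloc z v t \<in> borel_measurable (filt M \<tau> T)"
    using t by (intro opt_alloc_filt_measurable) simp
  have "AE \<omega> in M. \<bar>opt_alloc z v t \<omega>\<bar> \<le> disc r t * (level_bound z v / \<alpha> t)"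
    using abs_opt_alloc_le[OF _ t] by (rule AE_I2)
  then show "\<exists>C. AE \<omega> in M. \<bar>opt_alloc z v t \<omega>\<bar> \<le> C" ..
next
  show "AE \<omega> in M. (\<Sum>t=1..T. opt_alloc z v t \<omega> / disc r t) = v - claim z \<omega>"
    using budget_opt_alloc by (rule AE_I2)
qed

lemma admissible_measurable:
  assumes "Y \<in> adm M \<tau> T r W" and "t \<in> {1..T}"
  shows "Y t \<in> borel_measurable M"
  using assms measurable_filt_imp_measurable[OF \<tau>_measurable]
  unfolding adm_def by blast

lemma admissible_discounted_AE_bounded:
  assumes "Y \<in> adm M \<tau> T r W" and "t \<in> {1..T}"
  obtains C where "AE \<omega> in M. \<bar>Y t \<omega> / disc r t\<bar> \<le> C"
proof -
  obtain C where "AE \<omega> in M. \<bar>Y t \<omega>\<bar> \<le> C"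
    using assms unfolding adm_def Linf_def by blast
  then have "AE \<omega> in M. \<bar>Y t \<omega> / disc r t\<bar> \<le> C / disc r t"
    by eventually_elim (use disc_pos[OF assms(2)] in \<open>simp add: abs_div divide_right_mono\<close>)
  then show ?thesis by (rule that)
qed

definition util :: "nat \<Rightarrow> real \<Rightarrow> real" where
  "util t x = (1 / \<alpha> t) * (1 - exp (- \<alpha> t * x))"

lemma marginal_opt_alloc:
  assumes "\<omega> \<in> space M" and "t \<in> {1..T}"
  shows "exp (- \<alpha> t * (opt_alloc z v t \<omega> / disc r t)) = exp (- level z v t \<omega>)"
  unfolding opt_alloc_discounted[OF assms] using \<alpha>_pos[OF assms(2)] by simp

lemma util_opt_alloc:
  assumes "\<omega> \<in> space M" and "t \<in> {1..T}"
  shows "util t (opt_alloc z v t \<omega> / disc r t) = 1 / \<alpha> t * (1 - exp (- level z v t \<omega>))"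
  unfolding util_def marginal_opt_alloc[OF assms] ..

lemma integrable_util_admissible:
  assumes "Y \<in> adm M \<tau> T r W" and "t \<in> {1..T}"
  shows "integrable M (\<lambda>\<omega>. util t (Y t \<omega> / disc r t))"
proof -
  obtain C where C: "AE \<omega> in M. \<bar>Y t \<omega> / disc r t\<bar> \<le> C"
    using admissible_discounted_AE_bounded[OF assms] .
  have [measurable]: "Y t \<in> borel_measurable M"
    using admissible_measurable[OF assms] .
  show ?thesis
  proof (rule integrable_const_bound)
    show "AE \<omega> in M. norm (util t (Y t \<omega> / disc r t)) \<le> (1 / \<alpha> t) * (1 + exp (\<alpha> t * C))"
      using C
    proof eventually_elim
      case (elim \<omega>)
      show ?case
        unfolding util_def real_norm_def by (rule exp_utility_abs_le[OF \<alpha>_pos[OF assms(2)] elim])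
    qed
  qed (simp add: util_def)
qed

lemma EU_opt_alloc:
  "EU M T r util (opt_alloc z v) = (\<Sum>t=1..T. 1 / \<alpha> t) * (1 - exp (- \<beta> 1 * (v - ln (h z 0))))"
proof -
  have "(\<integral>\<omega>. util t (opt_alloc z v t \<omega> / disc r t) \<partial>M) = 1 / \<alpha> t * (1 - exp (- \<beta> 1 * (v - ln (h z 0))))"
    if t: "t \<in> {1..T}" for t
  proof -
    have "(\<integral>\<omega>. util t (opt_alloc z v t \<omega> / disc r t) \<partial>M) = (\<integral>\<omega>. 1 / \<alpha> t * (1 - exp (- level z v t \<omega>)) \<partial>M)"
      by (rule Bochner_Integration.integral_cong[OF refl util_opt_alloc[OF _ t]])
    also have "\<dots> = 1 / \<alpha> t * (1 - (\<integral>\<omega>. exp (- level z v t \<omega>) \<partial>M))"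
      using t by (simp add: prob_space)
    also have "(\<integral>\<omega>. exp (- level z v t \<omega>) \<partial>M) = (\<integral>\<omega>. exp (- level z v T \<omega>) \<partial>M)"
      using integral_marginal_eq_terminal[OF t, of "\<lambda>_. 1" 1 1] by simp
    finally show ?thesis
      by (simp only: integral_terminal_marginal)
  qed
  then show ?thesis
    unfolding EU_def by (simp add: sum_distrib_right)
qed

section \<open>Optimality\<close>

lemma discounted_diff_AE_bounded:
  assumes "Y \<in> adm M \<tau> T r W" and "t \<in> {1..T}"
  obtains C where "AE \<omega> in M. \<bar>Y t \<omega> / disc r t - opt_alloc z v t \<omega> / disc r t\<bar> \<le> C"
proof -
  obtain C1 C2 where "AE \<omega> in M. \<bar>Y t \<omega> / disc r t\<bar> \<le> C1"
    and "AE \<omega> in M. \<bar>opt_alloc z v t \<omega> / disc r t\<bar> \<le> C2"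
    using admissible_discounted_AE_bounded[OF assms] opt_alloc_admissible
      admissible_discounted_AE_bounded[OF _ assms(2)] by metis
  then have "AE \<omega> in M. \<bar>Y t \<omega> / disc r t - opt_alloc z v t \<omega> / disc r t\<bar> \<le> C1 + C2"
    by eventually_elim linarith
  then show ?thesis by (rule that)
qed

lemma integrable_marginal_times_diff:
  assumes "Y \<in> adm M \<tau> T r W" and "t \<in> {1..T}" and "s \<in> {1..T}"
  shows "integrable M (\<lambda>\<omega>. exp (- level z v s \<omega>) * (Y t \<omega> / disc r t - opt_alloc z v t \<omega> / disc r t))"
proof -
  obtain C where "AE \<omega> in M. \<bar>Y t \<omega> / disc r t - opt_alloc z v t \<omega> / disc r t\<bar> \<le> C"
    using discounted_diff_AE_bounded[OF assms(1,2)] .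
  moreover have "Y t \<in> borel_measurable M" "opt_alloc z v t \<in> borel_measurable M"
    using admissible_measurable[OF _ assms(2)] assms(1) opt_alloc_admissible by blast+
  ultimately show ?thesis
    using assms(3) by (intro integrable_marginal_times) auto
qed

definition tangent_gap :: "(nat \<Rightarrow> 'a \<Rightarrow> real) \<Rightarrow> (nat \<Rightarrow> real) \<Rightarrow> real \<Rightarrow> nat \<Rightarrow> 'a \<Rightarrow> real" where
  "tangent_gap Y z v t \<omega> = util t (Y t \<omega> / disc r t) - util t (opt_alloc z v t \<omega> / disc r t)
     - exp (- level z v t \<omega>) * (Y t \<omega> / disc r t - opt_alloc z v t \<omega> / disc r t)"

lemma tangent_gap_nonpos:
  assumes "\<omega> \<in> space M" and "t \<in> {1..T}"
  shows "tangent_gap Y z v t \<omega> \<le> 0"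
  using exp_utility_below_tangent[OF \<alpha>_pos[OF assms(2)],
      where x = "opt_alloc z v t \<omega> / disc r t" and y = "Y t \<omega> / disc r t"]
  unfolding tangent_gap_def util_def marginal_opt_alloc[OF assms, symmetric] by linarith

lemma tangent_gap_eq_0_imp:
  assumes "\<omega> \<in> space M" and "t \<in> {1..T}" and "tangent_gap Y z v t \<omega> = 0"
  shows "Y t \<omega> = opt_alloc z v t \<omega>"
proof (rule ccontr)
  assume "Y t \<omega> \<noteq> opt_alloc z v t \<omega>"
  then have "Y t \<omega> / disc r t \<noteq> opt_alloc z v t \<omega> / disc r t"
    using disc_pos[OF assms(2)] by simp
  from exp_utility_below_tangent_strict[OF \<alpha>_pos[OF assms(2)] this] assms(3) show False
    unfolding tangent_gap_def util_def marginal_opt_alloc[OF assms(1,2), symmetric] by linarith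
qed

lemma integral_util_diff:
  assumes Y: "Y \<in> adm M \<tau> T r W" and t: "t \<in> {1..T}"
  shows "integrable M (tangent_gap Y z v t)"
    and "(\<integral>\<omega>. util t (Y t \<omega> / disc r t) \<partial>M) - (\<integral>\<omega>. util t (opt_alloc z v t \<omega> / disc r t) \<partial>M)
      = integral\<^sup>L M (tangent_gap Y z v t)
        + (\<integral>\<omega>. exp (- level z v T \<omega>) * (Y t \<omega> / disc r t - opt_alloc z v t \<omega> / disc r t) \<partial>M)"
proof -
  let ?D = "\<lambda>\<omega>. Y t \<omega> / disc r t - opt_alloc z v t \<omega> / disc r t"
  have util_Y: "integrable M (\<lambda>\<omega>. util t (Y t \<omega> / disc r t))"
    and util_X: "integrable M (\<lambda>\<omega>. util t (opt_alloc z v t \<omega> / disc r t))"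
    using integrable_util_admissible[OF _ t] Y opt_alloc_admissible by blast+
  have marginal: "integrable M (\<lambda>\<omega>. exp (- level z v t \<omega>) * ?D \<omega>)"
    by (rule integrable_marginal_times_diff[OF Y t t])
  show "integrable M (tangent_gap Y z v t)"
    unfolding tangent_gap_def using util_Y util_X marginal by auto
  obtain d where d: "\<And>\<omega>. \<omega> \<in> space M \<Longrightarrow> real t < \<tau> \<omega> \<Longrightarrow> Y t \<omega> = d"
    using Y t filt_measurable_const_on_survival unfolding adm_def by blast
  obtain C where C: "AE \<omega> in M. \<bar>?D \<omega>\<bar> \<le> C"
    using discounted_diff_AE_bounded[OF Y t] .
  have [measurable]: "Y t \<in> borel_measurable M" "opt_alloc z v t \<in> borel_measurable M"
    using admissible_measurable[OF _ t] Y opt_alloc_admissible by blast+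
  have "(\<integral>\<omega>. exp (- level z v t \<omega>) * ?D \<omega> \<partial>M) = (\<integral>\<omega>. exp (- level z v T \<omega>) * ?D \<omega> \<partial>M)"
  proof (rule integral_marginal_eq_terminal[OF t _ C])
    show "?D \<omega> = d / disc r t - alive_level z v t / \<alpha> t"
      if "\<omega> \<in> space M" and "real t < \<tau> \<omega>" for \<omega>
      using that d opt_alloc_discounted[OF that(1) t] by (simp add: level_def)
  qed measurable
  then show "(\<integral>\<omega>. util t (Y t \<omega> / disc r t) \<partial>M) - (\<integral>\<omega>. util t (opt_alloc z v t \<omega> / disc r t) \<partial>M)
      = integral\<^sup>L M (tangent_gap Y z v t) + (\<integral>\<omega>. exp (- level z v T \<omega>) * ?D \<omega> \<partial>M)"
    unfolding tangent_gap_def using util_Y util_X marginal by simp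
qed

lemma sum_integral_terminal_marginal_diff:
  assumes Y: "Y \<in> adm M \<tau> T r (\<lambda>\<omega>. v - claim z \<omega>)"
  shows "(\<Sum>t=1..T. \<integral>\<omega>. exp (- level z v T \<omega>) * (Y t \<omega> / disc r t - opt_alloc z v t \<omega> / disc r t) \<partial>M) = 0"
proof -
  have "(\<Sum>t=1..T. \<integral>\<omega>. exp (- level z v T \<omega>) * (Y t \<omega> / disc r t - opt_alloc z v t \<omega> / disc r t) \<partial>M)
      = (\<integral>\<omega>. (\<Sum>t=1..T. exp (- level z v T \<omega>) * (Y t \<omega> / disc r t - opt_alloc z v t \<omega> / disc r t)) \<partial>M)"
    by (rule Bochner_Integration.integral_sum[symmetric])
      (use integrable_marginal_times_diff[OF Y] T_ge_1 in auto)
  also have "\<dots> = (\<integral>\<omega>. exp (- level z v T \<omega>)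
          * ((\<Sum>t=1..T. Y t \<omega> / disc r t) - (\<Sum>t=1..T. opt_alloc z v t \<omega> / disc r t)) \<partial>M)"
    by (simp add: sum_distrib_left sum_subtractf right_diff_distrib)
  also have "\<dots> = 0"
  proof (rule integral_eq_zero_AE)
    have "AE \<omega> in M. (\<Sum>t=1..T. Y t \<omega> / disc r t) = v - claim z \<omega>"
      using Y unfolding adm_def by blast
    then show "AE \<omega> in M. exp (- level z v T \<omega>)
        * ((\<Sum>t=1..T. Y t \<omega> / disc r t) - (\<Sum>t=1..T. opt_alloc z v t \<omega> / disc r t)) = 0"
      using AE_space by eventually_elim (simp only: budget_opt_alloc, simp)
  qed
  finally show ?thesis .
qed

lemma EU_diff_opt_alloc:
  assumes Y: "Y \<in> adm M \<tau> T r (\<lambda>\<omega>. v - claim z \<omega>)"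
  shows "EU M T r util Y - EU M T r util (opt_alloc z v) = (\<Sum>t=1..T. integral\<^sup>L M (tangent_gap Y z v t))"
proof -
  have "EU M T r util Y - EU M T r util (opt_alloc z v)
      = (\<Sum>t=1..T. (\<integral>\<omega>. util t (Y t \<omega> / disc r t) \<partial>M) - (\<integral>\<omega>. util t (opt_alloc z v t \<omega> / disc r t) \<partial>M))"
    unfolding EU_def by (simp add: sum_subtractf)
  also have "\<dots> = (\<Sum>t=1..T. integral\<^sup>L M (tangent_gap Y z v t))"
    using sum_integral_terminal_marginal_diff[OF Y] by (simp add: integral_util_diff(2)[OF Y] sum.distrib)
  finally show ?thesis .
qed

lemma integral_tangent_gap_nonpos:
  assumes "t \<in> {1..T}"
  shows "integral\<^sup>L M (tangent_gap Y z v t) \<le> 0"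
proof -
  have "0 \<le> (\<integral>\<omega>. - tangent_gap Y z v t \<omega> \<partial>M)"
    using tangent_gap_nonpos[OF _ assms] by (intro integral_nonneg_AE AE_I2) simp
  then show ?thesis by simp
qed

lemma opt_alloc_optimal:
  assumes Y: "Y \<in> adm M \<tau> T r (\<lambda>\<omega>. v - claim z \<omega>)"
  shows "EU M T r util Y \<le> EU M T r util (opt_alloc z v)"
    and "EU M T r util Y = EU M T r util (opt_alloc z v) \<Longrightarrow> \<forall>t\<in>{1..T}. AE \<omega> in M. Y t \<omega> = opt_alloc z v t \<omega>"
proof -
  have "(\<Sum>t=1..T. integral\<^sup>L M (tangent_gap Y z v t)) \<le> 0"
    using integral_tangent_gap_nonpos by (intro sum_nonpos) auto
  then show "EU M T r util Y \<le> EU M T r util (opt_alloc z v)"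
    using EU_diff_opt_alloc[OF Y] by simp
  assume "EU M T r util Y = EU M T r util (opt_alloc z v)"
  then have "(\<Sum>t=1..T. - integral\<^sup>L M (tangent_gap Y z v t)) = 0"
    using EU_diff_opt_alloc[OF Y] by (simp add: sum_negf)
  then have zero: "\<forall>t\<in>{1..T}. - integral\<^sup>L M (tangent_gap Y z v t) = 0"
    using integral_tangent_gap_nonpos by (subst (asm) sum_nonneg_eq_0_iff) auto
  show "\<forall>t\<in>{1..T}. AE \<omega> in M. Y t \<omega> = opt_alloc z v t \<omega>"
  proof
    fix t
    assume t: "t \<in> {1..T}"
    have "AE \<omega> in M. - tangent_gap Y z v t \<omega> = 0"
      using integral_nonneg_eq_0_iff_AE[of M "\<lambda>\<omega>. - tangent_gap Y z v t \<omega>"] zero t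
        integral_util_diff(1)[OF Y t] tangent_gap_nonpos[OF _ t] by (auto intro: AE_I2)
    then show "AE \<omega> in M. Y t \<omega> = opt_alloc z v t \<omega>"
      using AE_space by eventually_elim (auto intro: tangent_gap_eq_0_imp[OF _ t])
  qed
qed

lemma Uval_claim: "Uval M \<tau> T r util (\<lambda>\<omega>. v - claim z \<omega>) = EU M T r util (opt_alloc z v)"
  unfolding Uval_def
  by (rule cSup_eq_maximum) (use opt_alloc_admissible opt_alloc_optimal(1) in blast)+

lemma Uval_claim_closed_form:
  "Uval M \<tau> T r util (\<lambda>\<omega>. v - claim z \<omega>) = (\<Sum>t=1..T. 1 / \<alpha> t) * (1 - exp (- \<beta> 1 * (v - ln (h z 0))))"
  by (simp add: Uval_claim EU_opt_alloc)

lemma Uval_const: "Uval M \<tau> T r util (\<lambda>\<omega>. v) = (\<Sum>t=1..T. 1 / \<alpha> t) * (1 - exp (- \<beta> 1 * v))"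
  using Uval_claim_closed_form[of v "\<lambda>_. 0"] by (simp add: claim_def h_zero_claim)

lemma indifference_price_iff:
  "Uval M \<tau> T r util (\<lambda>\<omega>. w + c - claim z \<omega>) = Uval M \<tau> T r util (\<lambda>\<omega>. w) \<longleftrightarrow> c = ln (h z 0)"
proof -
  have "0 < (\<Sum>t=1..T. 1 / \<alpha> t)"
    using T_ge_1 \<alpha>_pos by (intro sum_pos) auto
  moreover have "0 < \<beta> 1"
    using T_ge_1 by (intro \<beta>_pos) simp
  ultimately show ?thesis
    unfolding Uval_claim_closed_form Uval_const by (auto simp: algebra_simps)
qed

end

theorem theorem4p3:
  fixes M :: "'a measure" and \<tau> :: "'a \<Rightarrow> real" and T :: nat
    and r \<alpha> z :: "nat \<Rightarrow> real" and w :: real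
  assumes "prob_space M"
    and "T \<ge> 1"
    and "\<tau> \<in> borel_measurable M"
    and "\<forall>\<omega>\<in>space M. \<tau> \<omega> > 0"
    and "\<forall>s\<ge>0. measure M {\<omega>\<in>space M. \<tau> \<omega> = s} = 0"
    and "\<forall>t\<in>{1..T}. r t \<ge> 0"
    and "\<forall>t\<in>{1..T}. \<alpha> t > 0"
  defines "u \<equiv> (\<lambda>t x. (1 / \<alpha> t) * (1 - exp (- \<alpha> t * x)))"
    and "Z \<equiv> (\<lambda>\<omega>. (\<Sum>t=1..T. z t * (if real t - 1 < \<tau> \<omega> \<and> \<tau> \<omega> \<le> real t then 1 else 0))
                    + z (T + 1) * (if real T < \<tau> \<omega> then 1 else 0))"
    and "X \<equiv> (\<lambda>t \<omega>. let \<beta> = betaw \<alpha> T; h = hdef M \<tau> \<alpha> z T in disc r t / \<alpha> t *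
              (\<beta> 1 * (w + ln (h 0))
               - (\<Sum>k=1..t. \<beta> k * z k * (if real k - 1 < \<tau> \<omega> \<and> \<tau> \<omega> \<le> real k then 1 else 0))
               - \<beta> t * ln (h t) * (if real t < \<tau> \<omega> then 1 else 0)
               + (\<Sum>k=1..t-1. \<beta> (k + 1) * \<beta> k / \<alpha> k * ln (h k) * (if real k < \<tau> \<omega> then 1 else 0))))"
  shows "(\<forall>c::real. Uval M \<tau> T r u (\<lambda>\<omega>. w + c - Z \<omega>) = Uval M \<tau> T r u (\<lambda>\<omega>. w)
                  \<longleftrightarrow> c = ln (hdef M \<tau> \<alpha> z T 0))
    \<and> X \<in> adm M \<tau> T r (\<lambda>\<omega>. w + ln (hdef M \<tau> \<alpha> z T 0) - Z \<omega>)
    \<and> EU M T r u X = Uval M \<tau> T r u (\<lambda>\<omega>. w + ln (hdef M \<tau> \<alpha> z T 0) - Z \<omega>)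
    \<and> EU M T r u X = Uval M \<tau> T r u (\<lambda>\<omega>. w)
    \<and> (\<forall>Y\<in>adm M \<tau> T r (\<lambda>\<omega>. w + ln (hdef M \<tau> \<alpha> z T 0) - Z \<omega>).
          EU M T r u Y = Uval M \<tau> T r u (\<lambda>\<omega>. w + ln (hdef M \<tau> \<alpha> z T 0) - Z \<omega>)
          \<longrightarrow> (\<forall>t\<in>{1..T}. AE \<omega> in M. Y t \<omega> = X t \<omega>))"
proof -
  have "default_model M \<tau> T r \<alpha>"
    using assms(1-4,6,7) unfolding default_model_def default_model_axioms_def by blast
  then interpret default_model M \<tau> T r \<alpha> .
  let ?H = "ln (h z 0)"
  have u: "u = util" and Z: "Z = claim z" and X: "X = opt_alloc z (w + ?H)"
    unfolding u_def util_def Z_def claim_def X_def opt_alloc_def by (intro ext; simp add: Let_def)+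
  show ?thesis
    unfolding u Z X
  proof (intro conjI allI ballI impI)
    show "Uval M \<tau> T r util (\<lambda>\<omega>. w + c - claim z \<omega>) = Uval M \<tau> T r util (\<lambda>\<omega>. w) \<longleftrightarrow> c = ?H" for c
      by (rule indifference_price_iff)
    show "opt_alloc z (w + ?H) \<in> adm M \<tau> T r (\<lambda>\<omega>. w + ?H - claim z \<omega>)"
      by (rule opt_alloc_admissible)
    show "EU M T r util (opt_alloc z (w + ?H)) = Uval M \<tau> T r util (\<lambda>\<omega>. w + ?H - claim z \<omega>)"
      by (rule Uval_claim[symmetric])
    then show "EU M T r util (opt_alloc z (w + ?H)) = Uval M \<tau> T r util (\<lambda>\<omega>. w)"
      using indifference_price_iff[of w ?H z] by simp
  next
    fix Y t
    assume "Y \<in> adm M \<tau> T r (\<lambda>\<omega>. w + ?H - claim z \<omega>)"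
      and "EU M T r util Y = Uval M \<tau> T r util (\<lambda>\<omega>. w + ?H - claim z \<omega>)" and "t \<in> {1..T}"
    then show "AE \<omega> in M. Y t \<omega> = opt_alloc z (w + ?H) t \<omega>"
      unfolding Uval_claim using opt_alloc_optimal(2) by blast
  qed
qed

end
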